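(* For any $0\le p\le n$, any $\eta,\mu\in\mathcal P(S_p)$ and any $f_n\in\mathrm{Osc}_1(S_n)$, there exist functions $\mathcal U_{p,n,\eta}(f_n),\mathcal V_{p,n,\eta}(f_n),\mathcal W_{p,n,\eta}(f_n)\in\mathrm{Osc}_1(S_p)$ whose values depend only on $(p,n,\eta)$ and $f_n$ (not on $\mu$), such that $$[\Phi_{p,n}(\mu)-\Phi_{p,n}(\eta)](f_n)=2q_{p,n}\beta(\mathcal P_{p,n})\,[\mu-\eta]\big(\mathcal U_{p,n,\eta}(f_n)\big)+\mathcal R_{p,n}(\mu,\eta)(f_n),$$ where $$|\mathcal R_{p,n}(\mu,\eta)(f_n)|\le 4q_{p,n}^3\beta(\mathcal P_{p,n})\,\big|[\mu-\eta](\mathcal V_{p,n,\eta}(f_n))\big|\,\big|[\mu-\eta](\mathcal W_{p,n,\eta}(f_n))\big|.$$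
   Context: Let $(S_n)_{n\ge0}$ be measurable spaces, $\mathcal M_n$ ($n\ge1$) Markov kernels from $S_{n-1}$ to $S_n$, and $\mathcal G_n:S_n\to(0,1)$ ($n\ge0$) measurable with $q_n:=\sup_{x,y}\mathcal G_n(x)/\mathcal G_n(y)<\infty$. Let $\mathcal Q_{p+1}(x,dy):=\mathcal G_p(x)\mathcal M_{p+1}(x,dy)$, $\mathcal Q_{p,n}:=\mathcal Q_{p+1}\mathcal Q_{p+2}\cdots\mathcal Q_n$ ($\mathcal Q_{n,n}=\mathrm{Id}$), $\mathcal P_{p,n}(f):=\mathcal Q_{p,n}(f)/\mathcal Q_{p,n}(1)$, and for $\mu\in\mathcal P(S_p)$, $\Phi_{p,n}(\mu)(f):=\mu(\mathcal Q_{p,n}f)/\mu(\mathcal Q_{p,n}1)$. Set $q_{p,n}:=\sup_{x,y\in S_p}\mathcal Q_{p,n}(1)(x)/\mathcal Q_{p,n}(1)(y)$ and $\beta(\mathcal P_{p,n}):=\sup_{f\in\mathrm{Osc}_1(S_n)}\mathrm{osc}(\mathcal P_{p,n}f)$, where $\mathrm{osc}(f)=\sup_{x,y}|f(x)-f(y)|$ and $\mathrm{Osc}_1(E)$ is the set of measurable functions on $E$ with oscillation at most $1$. *)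

theory Defs
  imports "HOL-Probability.Probability"
begin

text \<open>All state spaces S n are modelled as measurable spaces over one ambient type 'a.
  Functions on S n are real-valued functions 'a => real, considered on space (S n).\<close>

definition osc :: "'a measure \<Rightarrow> ('a \<Rightarrow> real) \<Rightarrow> real" where
  "osc E g = Sup {\<bar>g x - g y\<bar> | x y. x \<in> space E \<and> y \<in> space E}"

definition Osc1 :: "'a measure \<Rightarrow> ('a \<Rightarrow> real) set" where
  "Osc1 E = {f \<in> borel_measurable E. \<forall>x\<in>space E. \<forall>y\<in>space E. \<bar>f x - f y\<bar> \<le> 1}"

definition Qone :: "(nat \<Rightarrow> 'a \<Rightarrow> real) \<Rightarrow> (nat \<Rightarrow> 'a \<Rightarrow> 'a measure) \<Rightarrow> nat
    \<Rightarrow> ('a \<Rightarrow> real) \<Rightarrow> 'a \<Rightarrow> real" where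
  "Qone G M n f x = G (n - 1) x * (\<integral>y. f y \<partial>M n x)"

text \<open>Q_{p,n} = Q_{p+1} ... Q_n, with Q_{p,n} = Id for n <= p;
  recursively Q_{p,n} f = Q_{p,n-1}(Q_n f).\<close>
primrec Qpn :: "(nat \<Rightarrow> 'a \<Rightarrow> real) \<Rightarrow> (nat \<Rightarrow> 'a \<Rightarrow> 'a measure) \<Rightarrow> nat \<Rightarrow> nat
    \<Rightarrow> ('a \<Rightarrow> real) \<Rightarrow> 'a \<Rightarrow> real" where
  "Qpn G M p 0 f = f"
| "Qpn G M p (Suc n) f = (if Suc n \<le> p then f else Qpn G M p n (Qone G M (Suc n) f))"

definition Ppn :: "(nat \<Rightarrow> 'a \<Rightarrow> real) \<Rightarrow> (nat \<Rightarrow> 'a \<Rightarrow> 'a measure) \<Rightarrow> nat \<Rightarrow> nat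
    \<Rightarrow> ('a \<Rightarrow> real) \<Rightarrow> 'a \<Rightarrow> real" where
  "Ppn G M p n f x = Qpn G M p n f x / Qpn G M p n (\<lambda>_. 1) x"

definition Phi :: "(nat \<Rightarrow> 'a \<Rightarrow> real) \<Rightarrow> (nat \<Rightarrow> 'a \<Rightarrow> 'a measure) \<Rightarrow> nat \<Rightarrow> nat
    \<Rightarrow> 'a measure \<Rightarrow> ('a \<Rightarrow> real) \<Rightarrow> real" where
  "Phi G M p n \<mu> f = (\<integral>x. Qpn G M p n f x \<partial>\<mu>) / (\<integral>x. Qpn G M p n (\<lambda>_. 1) x \<partial>\<mu>)"

definition qpn :: "(nat \<Rightarrow> 'a measure) \<Rightarrow> (nat \<Rightarrow> 'a \<Rightarrow> real) \<Rightarrow> (nat \<Rightarrow> 'a \<Rightarrow> 'a measure)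
    \<Rightarrow> nat \<Rightarrow> nat \<Rightarrow> real" where
  "qpn S G M p n = Sup {Qpn G M p n (\<lambda>_. 1) x / Qpn G M p n (\<lambda>_. 1) y | x y.
       x \<in> space (S p) \<and> y \<in> space (S p)}"

definition beta :: "(nat \<Rightarrow> 'a measure) \<Rightarrow> (nat \<Rightarrow> 'a \<Rightarrow> real) \<Rightarrow> (nat \<Rightarrow> 'a \<Rightarrow> 'a measure)
    \<Rightarrow> nat \<Rightarrow> nat \<Rightarrow> real" where
  "beta S G M p n = Sup {osc (S p) (Ppn G M p n f) | f. f \<in> Osc1 (S n)}"

definition probs :: "'a measure \<Rightarrow> 'a measure set" where
  "probs E = {\<mu>. prob_space \<mu> \<and> sets \<mu> = sets E}"

end

theory Submission
  imports Defs
begin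

(* Write Q1 = Q_{p,n}(1) and g = P_{p,n}(f), so that Q_{p,n}(f) = Q1 * g and
   Phi_{p,n}(mu)(f) is the Q1-weighted mean of g under mu.  Two facts about the model are needed:
   Q1 is positive with Q1 x <= q_{p,n} * Q1 y, and g has oscillation at most beta(P_{p,n}).
   The rest concerns weighted means of a function g of oscillation at most b with respect to a
   positive weight w satisfying w x <= q * w y.  The weight normalised by its eta-mass,
   w' = w / eta(w), takes values in [1/q, q]; the reweighted centred function
   h = w' * (g - mean_eta g) has eta-integral 0 and size at most q*b; and
   mean_mu g - mean_eta g = mu(h) / mu(w').  Since eta(w') = 1, the first-order part of this ratio
   is mu(h) - eta(h), and the remainder mu(h) * (1 - mu(w')) / mu(w') is a product of two
   differences of integrals.  The witnesses are U = W = h / (2qb) and V = w' / (2q). *)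

lemma kernel_probs:
  assumes "L \<in> A \<rightarrow>\<^sub>M prob_algebra B" and "x \<in> space A"
  shows "L x \<in> probs B"
  using measurable_space[OF assms] by (auto simp: space_prob_algebra probs_def)

lemma probs_space: "\<mu> \<in> probs E \<Longrightarrow> space \<mu> = space E"
  unfolding probs_def using sets_eq_imp_space_eq by blast

lemma probs_space_nonempty: "\<mu> \<in> probs E \<Longrightarrow> space E \<noteq> {}"
  using prob_space.not_empty probs_space by (fastforce simp: probs_def)

lemma probs_integrable:
  fixes h :: "'a \<Rightarrow> real"
  assumes \<mu>: "\<mu> \<in> probs E" and h: "h \<in> borel_measurable E"
    and bound: "\<And>x. x \<in> space E \<Longrightarrow> \<bar>h x\<bar> \<le> B"
  shows "integrable \<mu> h"
proof -
  interpret prob_space \<mu> using \<mu> by (simp add: probs_def)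
  have "h \<in> borel_measurable \<mu>"
    using h \<mu> measurable_cong_sets by (fastforce simp: probs_def)
  moreover have "AE x in \<mu>. norm (h x) \<le> B"
    using bound probs_space[OF \<mu>] by (intro AE_I2) auto
  ultimately show ?thesis by (intro integrable_const_bound[where B=B])
qed

lemma probs_total: "\<mu> \<in> probs E \<Longrightarrow> measure \<mu> (space \<mu>) = 1"
  by (simp add: probs_def prob_space.prob_space)

lemma probs_integral_mono:
  fixes h h' :: "'a \<Rightarrow> real"
  assumes \<mu>: "\<mu> \<in> probs E"
    and h: "h \<in> borel_measurable E" "\<And>x. x \<in> space E \<Longrightarrow> \<bar>h x\<bar> \<le> B"
    and h': "h' \<in> borel_measurable E" "\<And>x. x \<in> space E \<Longrightarrow> \<bar>h' x\<bar> \<le> B'"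
    and le: "\<And>x. x \<in> space E \<Longrightarrow> h x \<le> h' x"
  shows "(\<integral>x. h x \<partial>\<mu>) \<le> (\<integral>x. h' x \<partial>\<mu>)"
proof (rule integral_mono)
  show "integrable \<mu> h" "integrable \<mu> h'" using probs_integrable[OF \<mu>] h h' by blast+
  show "h x \<le> h' x" if "x \<in> space \<mu>" for x using le that probs_space[OF \<mu>] by simp
qed

lemma probs_integral_bound:
  fixes h :: "'a \<Rightarrow> real"
  assumes \<mu>: "\<mu> \<in> probs E" and h: "h \<in> borel_measurable E"
    and bound: "\<And>x. x \<in> space E \<Longrightarrow> \<bar>h x\<bar> \<le> B"
  shows "\<bar>\<integral>x. h x \<partial>\<mu>\<bar> \<le> B"
proof -
  have "\<bar>\<integral>x. h x \<partial>\<mu>\<bar> \<le> (\<integral>x. \<bar>h x\<bar> \<partial>\<mu>)"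
    using integral_norm_bound[of \<mu> h] by simp
  also have "\<dots> \<le> (\<integral>x. B \<partial>\<mu>)"
    using bound by (intro probs_integral_mono[OF \<mu>, where B=B and B'="\<bar>B\<bar>"])
      (auto simp: h borel_measurable_abs)
  finally show ?thesis using probs_total[OF \<mu>] by simp
qed

lemma osc_centered:
  assumes "\<And>x y. x \<in> space E \<Longrightarrow> y \<in> space E \<Longrightarrow> \<bar>g x - g y\<bar> \<le> b"
  shows "\<exists>c. \<forall>x\<in>space E. \<bar>g x - c\<bar> \<le> (b :: real)"
proof (cases "space E = {}")
  case False
  then obtain z where "z \<in> space E" by auto
  with assms show ?thesis by blast
qed simp

lemma centered_abs_bound: "\<bar>f - c\<bar> \<le> r \<Longrightarrow> \<bar>f\<bar> \<le> \<bar>c\<bar> + (r :: real)"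
  by linarith

lemma Osc1_centered:
  "f \<in> Osc1 E \<Longrightarrow> \<exists>c. \<forall>x\<in>space E. \<bar>f x - c\<bar> \<le> 1"
  by (rule osc_centered) (auto simp: Osc1_def)

lemma osc_upper:
  assumes "\<And>x y. x \<in> space E \<Longrightarrow> y \<in> space E \<Longrightarrow> \<bar>h x - h y\<bar> \<le> B"
    and "x \<in> space E" "y \<in> space E"
  shows "\<bar>h x - h y\<bar> \<le> osc E h"
  unfolding osc_def using assms by (intro cSup_upper) (auto intro!: bdd_aboveI[of _ B])

lemma osc_least:
  assumes "\<And>x y. x \<in> space E \<Longrightarrow> y \<in> space E \<Longrightarrow> \<bar>h x - h y\<bar> \<le> B"
    and "space E \<noteq> {}"
  shows "osc E h \<le> B"
  unfolding osc_def using assms by (intro cSup_least) force+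

lemma half_range_Osc1:
  assumes h: "h \<in> borel_measurable E" and bound: "\<And>x. x \<in> space E \<Longrightarrow> \<bar>h x\<bar> \<le> B"
  shows "(\<lambda>x. h x / (2 * B)) \<in> Osc1 E"
proof -
  have "\<bar>h x / (2 * B) - h y / (2 * B)\<bar> \<le> 1" if "x \<in> space E" "y \<in> space E" for x y
  proof (cases "B = 0")
    case False
    then have "0 < B" using bound[OF that(1)] by linarith
    moreover have "\<bar>h x - h y\<bar> \<le> 2 * B" using bound[OF that(1)] bound[OF that(2)] by linarith
    ultimately show ?thesis by (simp add: diff_divide_distrib[symmetric] divide_le_eq)
  qed simp
  then show ?thesis using h unfolding Osc1_def by auto
qed

section \<open>The Feynman--Kac operators\<close>

lemma Qone_homog: "Qone G M k (\<lambda>y. c * h y) = (\<lambda>x. c * Qone G M k h x)"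
  by (auto simp: Qone_def)

lemma Qpn_homog: "Qpn G M p n (\<lambda>y. c * h y) = (\<lambda>x. c * Qpn G M p n h x)"
  by (induction n arbitrary: h) (auto simp: Qone_homog)

lemma Qpn_self: "Qpn G M p p h = h"
proof -
  have "n \<le> p \<Longrightarrow> Qpn G M p n h = h" for n by (induction n) auto
  then show ?thesis by simp
qed

locale fk_model =
  fixes S :: "nat \<Rightarrow> 'a measure" and M :: "nat \<Rightarrow> 'a \<Rightarrow> 'a measure"
    and G :: "nat \<Rightarrow> 'a \<Rightarrow> real"
  assumes kernel: "\<And>n. n \<ge> 1 \<Longrightarrow> M n \<in> S (n - 1) \<rightarrow>\<^sub>M prob_algebra (S n)"
    and G_meas: "\<And>n. G n \<in> borel_measurable (S n)"
    and G_pos: "\<And>n x. x \<in> space (S n) \<Longrightarrow> 0 < G n x"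
    and G_lt1: "\<And>n x. x \<in> space (S n) \<Longrightarrow> G n x < 1"
    and G_ratio: "\<And>n. \<exists>C. \<forall>x\<in>space (S n). \<forall>y\<in>space (S n). G n x / G n y \<le> C"
begin

lemma kernel_Suc: "M (Suc k) \<in> S k \<rightarrow>\<^sub>M prob_algebra (S (Suc k))"
  using kernel[of "Suc k"] by simp

lemma Qone_Suc: "Qone G M (Suc k) h = (\<lambda>x. G k x * (\<integral>y. h y \<partial>M (Suc k) x))"
  by (simp add: Qone_def fun_eq_iff)

lemma Qone_measurable:
  assumes "h \<in> borel_measurable (S (Suc k))"
  shows "Qone G M (Suc k) h \<in> borel_measurable (S k)"
proof -
  have "(\<lambda>x. \<integral>y. h y \<partial>M (Suc k) x) \<in> borel_measurable (S k)"
    using measurable_compose[OF measurable_prob_algebraD[OF kernel_Suc]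
        integral_measurable_subprob_algebra[OF assms]] .
  then show ?thesis unfolding Qone_Suc using G_meas[of k] by measurable
qed

text \<open>Since \<open>0 < G < 1\<close>, one step of the operator does not increase a sup-norm bound.\<close>
lemma Qone_bound:
  assumes h: "h \<in> borel_measurable (S (Suc k))"
    and bound: "\<And>y. y \<in> space (S (Suc k)) \<Longrightarrow> \<bar>h y\<bar> \<le> B" and x: "x \<in> space (S k)"
  shows "\<bar>Qone G M (Suc k) h x\<bar> \<le> B"
proof -
  have "\<bar>Qone G M (Suc k) h x\<bar> = G k x * \<bar>\<integral>y. h y \<partial>M (Suc k) x\<bar>"
    using G_pos[OF x] by (simp add: Qone_Suc abs_mult)
  also have "\<dots> \<le> \<bar>\<integral>y. h y \<partial>M (Suc k) x\<bar>"
    using G_pos[OF x] G_lt1[OF x] by (intro mult_left_le_one_le) auto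
  also have "\<dots> \<le> B"
    using probs_integral_bound[OF kernel_probs[OF kernel_Suc x] h bound] .
  finally show ?thesis .
qed

lemma Qone_mono:
  assumes "h \<in> borel_measurable (S (Suc k))" "\<And>y. y \<in> space (S (Suc k)) \<Longrightarrow> \<bar>h y\<bar> \<le> B"
    and "h' \<in> borel_measurable (S (Suc k))" "\<And>y. y \<in> space (S (Suc k)) \<Longrightarrow> \<bar>h' y\<bar> \<le> B'"
    and "\<And>y. y \<in> space (S (Suc k)) \<Longrightarrow> h y \<le> h' y" and x: "x \<in> space (S k)"
  shows "Qone G M (Suc k) h x \<le> Qone G M (Suc k) h' x"
  unfolding Qone_Suc using G_pos[OF x]
  by (auto intro!: mult_left_mono probs_integral_mono[OF kernel_probs[OF kernel_Suc x]] assms)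

text \<open>The bounded ratio of G yields a uniform positive lower bound for G.\<close>
lemma G_lower: "\<exists>l>0. \<forall>x\<in>space (S k). l \<le> G k x"
proof (cases "space (S k) = {}")
  case False
  then obtain y where y: "y \<in> space (S k)" by auto
  obtain C where C: "\<forall>x\<in>space (S k). \<forall>y\<in>space (S k). G k x / G k y \<le> C"
    using G_ratio by blast
  have "G k y \<le> C * G k x" if "x \<in> space (S k)" for x
    using C y that G_pos[OF that] by (auto simp: divide_le_eq)
  moreover have "1 \<le> C" using C y G_pos[OF y] by force
  ultimately show ?thesis using G_pos[OF y]
    by (intro exI[of _ "G k y / C"]) (auto simp: divide_le_eq mult.commute)
qed (intro exI[of _ 1], simp)

lemma Qone_lower:
  assumes h: "h \<in> borel_measurable (S (Suc k))"
    and bound: "\<And>y. y \<in> space (S (Suc k)) \<Longrightarrow> \<bar>h y\<bar> \<le> B"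
    and lower: "\<And>y. y \<in> space (S (Suc k)) \<Longrightarrow> l \<le> h y" and l: "0 < l"
  shows "\<exists>l'>0. \<forall>x\<in>space (S k). l' \<le> Qone G M (Suc k) h x"
proof -
  obtain lG where lG: "0 < lG" "\<And>x. x \<in> space (S k) \<Longrightarrow> lG \<le> G k x"
    using G_lower by blast
  have "lG * l \<le> Qone G M (Suc k) h x" if x: "x \<in> space (S k)" for x
  proof -
    have "lG * l \<le> G k x * l" using lG x l by simp
    also have "\<dots> = Qone G M (Suc k) (\<lambda>_. l) x"
      by (simp add: Qone_Suc probs_total[OF kernel_probs[OF kernel_Suc x]])
    also have "\<dots> \<le> Qone G M (Suc k) h x"
      using lower l by (intro Qone_mono[OF _ _ h bound _ x, of _ l]) auto
    finally show ?thesis .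
  qed
  then show ?thesis using lG l by (intro exI[of _ "lG * l"]) auto
qed

lemma Qpn_measurable_bound:
  assumes "p \<le> n" "h \<in> borel_measurable (S n)" "\<And>y. y \<in> space (S n) \<Longrightarrow> \<bar>h y\<bar> \<le> B"
  shows "Qpn G M p n h \<in> borel_measurable (S p) \<and> (\<forall>x\<in>space (S p). \<bar>Qpn G M p n h x\<bar> \<le> B)"
  using assms
proof (induction n arbitrary: h rule: dec_induct)
  case (step m)
  then show ?case by (simp add: Qone_measurable Qone_bound)
qed (simp add: Qpn_self)

lemma Qpn_mono:
  assumes "p \<le> n"
    and "h \<in> borel_measurable (S n)" "\<And>y. y \<in> space (S n) \<Longrightarrow> \<bar>h y\<bar> \<le> B"
    and "h' \<in> borel_measurable (S n)" "\<And>y. y \<in> space (S n) \<Longrightarrow> \<bar>h' y\<bar> \<le> B'"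
    and "\<And>y. y \<in> space (S n) \<Longrightarrow> h y \<le> h' y" and "x \<in> space (S p)"
  shows "Qpn G M p n h x \<le> Qpn G M p n h' x"
  using assms
proof (induction n arbitrary: h h' rule: dec_induct)
  case (step m)
  note h = step.prems(1,2) and h' = step.prems(3,4)
  have "Qpn G M p m (Qone G M (Suc m) h) x \<le> Qpn G M p m (Qone G M (Suc m) h') x"
    by (rule step.IH[OF Qone_measurable[OF h(1)] Qone_bound[OF h] Qone_measurable[OF h'(1)]
          Qone_bound[OF h'] Qone_mono[OF h h' step.prems(5)] step.prems(6)])
  then show ?case using step.hyps by simp
qed (simp add: Qpn_self)

lemma Qpn_lower:
  assumes "p \<le> n" "h \<in> borel_measurable (S n)" "\<And>y. y \<in> space (S n) \<Longrightarrow> \<bar>h y\<bar> \<le> B"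
    and "\<And>y. y \<in> space (S n) \<Longrightarrow> l \<le> h y" "0 < l"
  shows "\<exists>l'>0. \<forall>x\<in>space (S p). l' \<le> Qpn G M p n h x"
  using assms
proof (induction n arbitrary: h l rule: dec_induct)
  case base
  then show ?case by (auto simp: Qpn_self)
next
  case (step m)
  obtain l' where "0 < l'" "\<And>x. x \<in> space (S m) \<Longrightarrow> l' \<le> Qone G M (Suc m) h x"
    using Qone_lower[OF step.prems] by blast
  from step.IH[OF Qone_measurable[OF step.prems(1)] Qone_bound[OF step.prems(1,2)] this(2,1)]
  show ?case using step.hyps by simp
qed

lemma Qpn_one:
  assumes "p \<le> n"
  shows "Qpn G M p n (\<lambda>_. 1) \<in> borel_measurable (S p)"
    and "\<exists>l>0. \<forall>x\<in>space (S p). l \<le> Qpn G M p n (\<lambda>_. 1) x \<and> Qpn G M p n (\<lambda>_. 1) x \<le> 1"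
proof -
  note bounded = Qpn_measurable_bound[OF assms, of "\<lambda>_. 1" 1]
  then show "Qpn G M p n (\<lambda>_. 1) \<in> borel_measurable (S p)" by simp
  obtain l where "0 < l" "\<forall>x\<in>space (S p). l \<le> Qpn G M p n (\<lambda>_. 1) x"
    using Qpn_lower[OF assms, of "\<lambda>_. 1" 1 1] by auto
  with bounded show "\<exists>l>0. \<forall>x\<in>space (S p). l \<le> Qpn G M p n (\<lambda>_. 1) x \<and> Qpn G M p n (\<lambda>_. 1) x \<le> 1"
    by force
qed

text \<open>The sup defining \<open>q\<^sub>p\<^sub>,\<^sub>n\<close> is finite because \<open>Q\<^sub>p\<^sub>,\<^sub>n(1)\<close> is bounded above and away from 0.\<close>
lemma Qpn_one_ratio:
  assumes "p \<le> n" and x: "x \<in> space (S p)" and y: "y \<in> space (S p)"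
  shows "Qpn G M p n (\<lambda>_. 1) x \<le> qpn S G M p n * Qpn G M p n (\<lambda>_. 1) y"
proof -
  define Q1 where "Q1 = Qpn G M p n (\<lambda>_. 1)"
  obtain l where l: "0 < l" "\<And>z. z \<in> space (S p) \<Longrightarrow> l \<le> Q1 z \<and> Q1 z \<le> 1"
    using Qpn_one(2)[OF assms(1)] unfolding Q1_def by blast
  have "Q1 x' / Q1 y' \<le> 1 / l" if "x' \<in> space (S p)" "y' \<in> space (S p)" for x' y'
    using l(2)[OF that(1)] l(2)[OF that(2)] l(1) by (intro frac_le) auto
  then have "Q1 x / Q1 y \<le> qpn S G M p n"
    unfolding qpn_def Q1_def[symmetric] using x y
    by (intro cSup_upper) (auto intro!: bdd_aboveI[of _ "1 / l"])
  then show ?thesis using l(2)[OF y] l(1) unfolding Q1_def by (simp add: divide_le_eq)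
qed

lemma Qpn_Osc1_measurable:
  assumes pn: "p \<le> n" and f: "f \<in> Osc1 (S n)"
  shows "Qpn G M p n f \<in> borel_measurable (S p)"
proof -
  obtain c where "\<forall>y\<in>space (S n). \<bar>f y - c\<bar> \<le> 1" using Osc1_centered[OF f] by blast
  then have "\<bar>f y\<bar> \<le> \<bar>c\<bar> + 1" if "y \<in> space (S n)" for y
    using centered_abs_bound that by blast
  then show ?thesis using Qpn_measurable_bound[OF pn, of f "\<bar>c\<bar> + 1"] f by (simp add: Osc1_def)
qed

lemma Ppn_measurable:
  assumes "p \<le> n" and "f \<in> Osc1 (S n)"
  shows "Ppn G M p n f \<in> borel_measurable (S p)"
proof -
  have "Qpn G M p n f \<in> borel_measurable (S p)" "Qpn G M p n (\<lambda>_. 1) \<in> borel_measurable (S p)"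
    using Qpn_Osc1_measurable[OF assms] Qpn_one(1)[OF assms(1)] .
  then show ?thesis unfolding Ppn_def[abs_def] by measurable
qed

text \<open>\<open>Q\<^sub>p\<^sub>,\<^sub>n f = Q\<^sub>p\<^sub>,\<^sub>n(1) \<cdot> P\<^sub>p\<^sub>,\<^sub>n f\<close>, since \<open>Q\<^sub>p\<^sub>,\<^sub>n(1)\<close> does not vanish.\<close>
lemma Qpn_factor:
  assumes "p \<le> n" and "x \<in> space (S p)"
  shows "Qpn G M p n f x = Qpn G M p n (\<lambda>_. 1) x * Ppn G M p n f x"
proof -
  have "0 < Qpn G M p n (\<lambda>_. 1) x" using Qpn_one(2)[OF assms(1)] assms(2) by force
  then show ?thesis by (simp add: Ppn_def)
qed

text \<open>\<open>P\<^sub>p\<^sub>,\<^sub>n\<close> is an averaging operator: it maps a function within 1 of c to one within 1 of c.\<close>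
lemma Ppn_centered:
  assumes pn: "p \<le> n" and f: "f \<in> Osc1 (S n)"
  shows "\<exists>c. \<forall>x\<in>space (S p). \<bar>Ppn G M p n f x - c\<bar> \<le> 1"
proof -
  define Q1 where "Q1 = Qpn G M p n (\<lambda>_. 1)"
  obtain c where c: "\<And>y. y \<in> space (S n) \<Longrightarrow> \<bar>f y - c\<bar> \<le> 1"
    using Osc1_centered[OF f] by blast
  have fm: "f \<in> borel_measurable (S n)" using f by (simp add: Osc1_def)
  have f_bound: "\<bar>f y\<bar> \<le> \<bar>c\<bar> + 1" if "y \<in> space (S n)" for y
    using centered_abs_bound[OF c[OF that]] .
  have f_range: "c - 1 \<le> f y" "f y \<le> c + 1" if "y \<in> space (S n)" for y
    using c[OF that] by (auto simp: abs_le_iff)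
  have const: "Qpn G M p n (\<lambda>_. d) = (\<lambda>x. d * Q1 x)" for d
    using Qpn_homog[of G M p n d "\<lambda>_. 1"] unfolding Q1_def by simp
  have "\<bar>Ppn G M p n f x - c\<bar> \<le> 1" if x: "x \<in> space (S p)" for x
  proof -
    have "Qpn G M p n (\<lambda>_. c - 1) x \<le> Qpn G M p n f x"
      using f_range by (intro Qpn_mono[OF pn _ _ fm f_bound _ x, of _ "\<bar>c - 1\<bar>"]) auto
    moreover have "Qpn G M p n f x \<le> Qpn G M p n (\<lambda>_. c + 1) x"
      using f_range by (intro Qpn_mono[OF pn fm f_bound _ _ _ x, of _ "\<bar>c + 1\<bar>"]) auto
    moreover have "0 < Q1 x" using Qpn_one(2)[OF pn] x unfolding Q1_def by force
    ultimately have "c - 1 \<le> Ppn G M p n f x" "Ppn G M p n f x \<le> c + 1"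
      unfolding Ppn_def Q1_def[symmetric] const
      by (simp_all add: pos_le_divide_eq pos_divide_le_eq)
    then show ?thesis by (simp add: abs_le_iff)
  qed
  then show ?thesis by blast
qed

text \<open>Hence all \<open>P\<^sub>p\<^sub>,\<^sub>n f\<close> with \<open>f \<in> Osc\<^sub>1\<close> have oscillation at most 2, so \<open>\<beta>(P\<^sub>p\<^sub>,\<^sub>n)\<close> is finite and
  bounds the oscillation of each of them.\<close>
lemma Ppn_osc_beta:
  assumes pn: "p \<le> n" and f: "f \<in> Osc1 (S n)" and x: "x \<in> space (S p)" and y: "y \<in> space (S p)"
  shows "\<bar>Ppn G M p n f x - Ppn G M p n f y\<bar> \<le> beta S G M p n"
proof -
  have osc2: "\<bar>Ppn G M p n f' x' - Ppn G M p n f' y'\<bar> \<le> 2"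
    if f': "f' \<in> Osc1 (S n)" and xy: "x' \<in> space (S p)" "y' \<in> space (S p)" for f' x' y'
  proof -
    obtain c where c: "\<forall>z\<in>space (S p). \<bar>Ppn G M p n f' z - c\<bar> \<le> 1"
      using Ppn_centered[OF pn f'] by blast
    have "\<bar>Ppn G M p n f' x' - c\<bar> \<le> 1" "\<bar>Ppn G M p n f' y' - c\<bar> \<le> 1" using c xy by blast+
    then show ?thesis by (simp add: abs_le_iff)
  qed
  have "\<bar>Ppn G M p n f x - Ppn G M p n f y\<bar> \<le> osc (S p) (Ppn G M p n f)"
    using osc2[OF f] x y by (rule osc_upper)
  also have "\<dots> \<le> beta S G M p n"
    unfolding beta_def using f x
    by (intro cSup_upper) (auto intro!: bdd_aboveI[of _ 2] osc_least osc2)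
  finally show ?thesis .
qed

end

section \<open>Weighted means\<close>

text \<open>The elementary identity behind the expansion: with \<open>u = a/(2qb)\<close>, \<open>v = (e-1)/(2q)\<close> and
  \<open>e \<ge> 1/q\<close>, the remainder \<open>a/e - a = a(1-e)/e\<close> is bounded by \<open>4q\<^sup>3 b |v| |u|\<close>.\<close>
lemma ratio_expansion:
  fixes a e q b :: real
  assumes q: "1 \<le> q" and b: "0 \<le> b" and e: "1 / q \<le> e" and a: "b = 0 \<Longrightarrow> a = 0"
  shows "\<bar>a / e - 2 * q * b * (a / (2 * q * b))\<bar>
     \<le> 4 * q ^ 3 * b * \<bar>(e - 1) / (2 * q)\<bar> * \<bar>a / (2 * q * b)\<bar>"
proof (cases "b = 0")
  case False
  have e0: "0 < e" using e q by (smt (verit) divide_pos_pos)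
  have "a / e - 2 * q * b * (a / (2 * q * b)) = a * (1 - e) * (1 / e)"
    using e0 q False by (simp add: field_simps)
  then have "\<bar>a / e - 2 * q * b * (a / (2 * q * b))\<bar> = \<bar>a\<bar> * \<bar>e - 1\<bar> * (1 / e)"
    using e0 by (simp add: abs_mult abs_minus_commute)
  also have "\<dots> \<le> \<bar>a\<bar> * \<bar>e - 1\<bar> * q"
    using e e0 q by (intro mult_left_mono) (auto simp: divide_le_eq field_simps)
  also have "\<dots> = 4 * q ^ 3 * b * \<bar>(e - 1) / (2 * q)\<bar> * \<bar>a / (2 * q * b)\<bar>"
    using q b False by (simp add: abs_divide abs_mult field_simps power3_eq_cube)
  finally show ?thesis .
qed (use a in simp)

locale positive_weight =
  fixes E :: "'a measure" and w :: "'a \<Rightarrow> real" and q :: real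
  assumes w_meas: "w \<in> borel_measurable E"
    and w_pos: "\<And>x. x \<in> space E \<Longrightarrow> 0 < w x"
    and w_ratio: "\<And>x y. x \<in> space E \<Longrightarrow> y \<in> space E \<Longrightarrow> w x \<le> q * w y"
begin

definition wmass :: "'a measure \<Rightarrow> real" where
  "wmass \<mu> = (\<integral>x. w x \<partial>\<mu>)"

definition wmean :: "('a \<Rightarrow> real) \<Rightarrow> 'a measure \<Rightarrow> real" where
  "wmean g \<mu> = (\<integral>x. w x * g x \<partial>\<mu>) / wmass \<mu>"

lemma q_ge_1: "x \<in> space E \<Longrightarrow> 1 \<le> q"
  using w_ratio[of x x] w_pos[of x] by simp

lemma w_bounded: "\<exists>B. \<forall>x\<in>space E. \<bar>w x\<bar> \<le> B"
proof (cases "space E = {}")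
  case False
  then obtain y where "y \<in> space E" by auto
  then show ?thesis using w_ratio w_pos by (intro exI[of _ "q * w y"]) (auto simp: less_imp_le)
qed auto

lemma w_le_wmass:
  assumes \<mu>: "\<mu> \<in> probs E" and x: "x \<in> space E"
  shows "w x \<le> q * wmass \<mu>" and "wmass \<mu> \<le> q * w x"
proof -
  obtain B where B: "\<And>y. y \<in> space E \<Longrightarrow> \<bar>w y\<bar> \<le> B" using w_bounded by blast
  have qw: "(\<lambda>y. q * w y) \<in> borel_measurable E" using w_meas by measurable
  have "(\<integral>y. w x \<partial>\<mu>) \<le> (\<integral>y. q * w y \<partial>\<mu>)"
    using B w_ratio[OF x] by (intro probs_integral_mono[OF \<mu>, of _ "\<bar>w x\<bar>" _ "\<bar>q\<bar> * B"])
      (auto simp: w_meas qw abs_mult mult_left_mono)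
  then show "w x \<le> q * wmass \<mu>" by (simp add: wmass_def probs_total[OF \<mu>])
  have "(\<integral>y. w y \<partial>\<mu>) \<le> (\<integral>y. q * w x \<partial>\<mu>)"
    using B w_ratio[OF _ x] by (intro probs_integral_mono[OF \<mu>, of _ B _ "\<bar>q * w x\<bar>"])
      (auto simp: w_meas)
  then show "wmass \<mu> \<le> q * w x" by (simp add: wmass_def probs_total[OF \<mu>])
qed

lemma wmass_pos:
  assumes \<mu>: "\<mu> \<in> probs E" shows "0 < wmass \<mu>"
proof -
  obtain x where x: "x \<in> space E" using probs_space_nonempty[OF \<mu>] by auto
  have "0 < q * wmass \<mu>" using w_le_wmass(1)[OF \<mu> x] w_pos[OF x] by linarith
  then show ?thesis using q_ge_1[OF x] by (simp add: zero_less_mult_iff)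
qed

lemma wmass_ratio:
  assumes \<mu>: "\<mu> \<in> probs E" and \<nu>: "\<nu> \<in> probs E"
  shows "wmass \<nu> \<le> q * wmass \<mu>"
proof -
  obtain B where B: "\<And>y. y \<in> space E \<Longrightarrow> \<bar>w y\<bar> \<le> B" using w_bounded by blast
  have qw: "(\<lambda>y. q * w y) \<in> borel_measurable E" using w_meas by measurable
  have "(\<integral>x. wmass \<nu> \<partial>\<mu>) \<le> (\<integral>x. q * w x \<partial>\<mu>)"
    using B w_le_wmass(2)[OF \<nu>]
    by (intro probs_integral_mono[OF \<mu>, of _ "\<bar>wmass \<nu>\<bar>" _ "\<bar>q\<bar> * B"])
      (auto simp: qw abs_mult mult_left_mono)
  then show ?thesis by (simp add: wmass_def probs_total[OF \<mu>])
qed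

lemma w_times_bounded:
  assumes "\<And>x y. x \<in> space E \<Longrightarrow> y \<in> space E \<Longrightarrow> \<bar>g x - g y\<bar> \<le> b"
  shows "\<exists>C. \<forall>x\<in>space E. \<bar>w x * g x\<bar> \<le> C"
proof -
  obtain Bw where Bw: "\<And>x. x \<in> space E \<Longrightarrow> \<bar>w x\<bar> \<le> Bw" using w_bounded by blast
  obtain c where c: "\<forall>x\<in>space E. \<bar>g x - c\<bar> \<le> b" using osc_centered assms by metis
  have "\<bar>w x\<bar> * \<bar>g x\<bar> \<le> Bw * (\<bar>c\<bar> + b)" if x: "x \<in> space E" for x
    using mult_mono[OF Bw[OF x] centered_abs_bound order_trans[OF abs_ge_zero Bw[OF x]]] c x
    by simp
  then show ?thesis by (intro exI[of _ "Bw * (\<bar>c\<bar> + b)"]) (simp add: abs_mult)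
qed

lemma wmean_deviation:
  assumes g: "g \<in> borel_measurable E"
    and g_osc: "\<And>x y. x \<in> space E \<Longrightarrow> y \<in> space E \<Longrightarrow> \<bar>g x - g y\<bar> \<le> b"
    and \<mu>: "\<mu> \<in> probs E" and x: "x \<in> space E"
  shows "\<bar>g x - wmean g \<mu>\<bar> \<le> b"
proof -
  obtain C where C: "\<And>y. y \<in> space E \<Longrightarrow> \<bar>w y * g y\<bar> \<le> C"
    using w_times_bounded[of g b] g_osc by metis
  obtain Bw where Bw: "\<And>y. y \<in> space E \<Longrightarrow> \<bar>w y\<bar> \<le> Bw" using w_bounded by blast
  have wg: "(\<lambda>y. w y * g y) \<in> borel_measurable E" using w_meas g by measurable
  have wc: "(\<lambda>y. d * w y) \<in> borel_measurable E" for d using w_meas by measurable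
  have wc_bound: "\<bar>d * w y\<bar> \<le> \<bar>d\<bar> * Bw" if "y \<in> space E" for d y
    using Bw[OF that] by (simp add: abs_mult mult_left_mono)
  have lower: "(g x - b) * w y \<le> w y * g y" and upper: "w y * g y \<le> (g x + b) * w y"
    if y: "y \<in> space E" for y
  proof -
    have "g x - b \<le> g y" "g y \<le> g x + b" using g_osc[OF x y] by (auto simp: abs_le_iff)
    with mult_right_mono[OF _ less_imp_le[OF w_pos[OF y]]]
    show "(g x - b) * w y \<le> w y * g y" "w y * g y \<le> (g x + b) * w y"
      by (metis mult.commute)+
  qed
  have "(\<integral>y. (g x - b) * w y \<partial>\<mu>) \<le> (\<integral>y. w y * g y \<partial>\<mu>)"
    using lower by (intro probs_integral_mono[OF \<mu> wc wc_bound wg C])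
  moreover have "(\<integral>y. w y * g y \<partial>\<mu>) \<le> (\<integral>y. (g x + b) * w y \<partial>\<mu>)"
    using upper by (intro probs_integral_mono[OF \<mu> wg C wc wc_bound])
  ultimately have "g x - b \<le> wmean g \<mu>" "wmean g \<mu> \<le> g x + b"
    using wmass_pos[OF \<mu>] unfolding wmean_def wmass_def
    by (simp_all add: pos_le_divide_eq pos_divide_le_eq)
  then show ?thesis by (simp add: abs_le_iff)
qed

text \<open>The weight normalised by its mass under \<open>\<eta>\<close>, and g centred at its \<open>\<eta>\<close>-mean and
  reweighted; their \<open>\<mu>\<close>-integrals express the difference of weighted means.\<close>
definition nweight :: "'a measure \<Rightarrow> 'a \<Rightarrow> real" where
  "nweight \<eta> x = w x / wmass \<eta>"

definition centred :: "('a \<Rightarrow> real) \<Rightarrow> 'a measure \<Rightarrow> 'a \<Rightarrow> real" where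
  "centred g \<eta> x = nweight \<eta> x * (g x - wmean g \<eta>)"

lemma nweight_bounds:
  assumes \<eta>: "\<eta> \<in> probs E" and x: "x \<in> space E"
  shows "0 < nweight \<eta> x" "nweight \<eta> x \<le> q"
  using w_pos[OF x] wmass_pos[OF \<eta>] w_le_wmass[OF \<eta> x]
  by (auto simp: nweight_def divide_le_eq)

lemma integral_nweight: "(\<integral>x. nweight \<eta> x \<partial>\<mu>) = wmass \<mu> / wmass \<eta>"
  by (simp add: nweight_def wmass_def)

lemma integral_centred:
  assumes g: "g \<in> borel_measurable E"
    and g_osc: "\<And>x y. x \<in> space E \<Longrightarrow> y \<in> space E \<Longrightarrow> \<bar>g x - g y\<bar> \<le> b"
    and \<eta>: "\<eta> \<in> probs E" and \<mu>: "\<mu> \<in> probs E"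
  shows "(\<integral>x. centred g \<eta> x \<partial>\<mu>) = (wmean g \<mu> - wmean g \<eta>) * wmass \<mu> / wmass \<eta>"
proof -
  obtain C where C: "\<And>x. x \<in> space E \<Longrightarrow> \<bar>w x * g x\<bar> \<le> C"
    using w_times_bounded[of g b] g_osc by metis
  obtain Bw where Bw: "\<And>x. x \<in> space E \<Longrightarrow> \<bar>w x\<bar> \<le> Bw" using w_bounded by blast
  have "integrable \<mu> (\<lambda>x. w x * g x)"
    using C g w_meas by (intro probs_integrable[OF \<mu>]) auto
  moreover have "integrable \<mu> (\<lambda>x. wmean g \<eta> * w x)"
    using Bw w_meas by (intro integrable_mult_right probs_integrable[OF \<mu>])
  moreover have "centred g \<eta> x = (w x * g x - wmean g \<eta> * w x) / wmass \<eta>" for x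
    unfolding centred_def nweight_def
    by (simp add: right_diff_distrib diff_divide_distrib mult.commute)
  ultimately have "(\<integral>x. centred g \<eta> x \<partial>\<mu>)
      = ((\<integral>x. w x * g x \<partial>\<mu>) - wmean g \<eta> * wmass \<mu>) / wmass \<eta>"
    by (simp add: wmass_def)
  moreover have "(wmean g \<mu> - wmean g \<eta>) * wmass \<mu>
      = (\<integral>x. w x * g x \<partial>\<mu>) - wmean g \<eta> * wmass \<mu>"
    using wmass_pos[OF \<mu>] by (simp add: wmean_def[of g \<mu>] left_diff_distrib)
  ultimately show ?thesis by simp
qed

lemma centred_bound:
  assumes g: "g \<in> borel_measurable E"
    and g_osc: "\<And>x y. x \<in> space E \<Longrightarrow> y \<in> space E \<Longrightarrow> \<bar>g x - g y\<bar> \<le> b"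
    and \<eta>: "\<eta> \<in> probs E" and x: "x \<in> space E"
  shows "\<bar>centred g \<eta> x\<bar> \<le> q * b"
  using nweight_bounds[OF \<eta> x] wmean_deviation[OF g g_osc \<eta> x]
  by (auto simp: centred_def abs_mult intro: mult_mono)

theorem wmean_expansion:
  assumes g: "g \<in> borel_measurable E"
    and g_osc: "\<And>x y. x \<in> space E \<Longrightarrow> y \<in> space E \<Longrightarrow> \<bar>g x - g y\<bar> \<le> b"
    and \<eta>: "\<eta> \<in> probs E"
  shows "\<exists>U V. U \<in> Osc1 E \<and> V \<in> Osc1 E \<and> (\<forall>\<mu>\<in>probs E.
      \<bar>(wmean g \<mu> - wmean g \<eta>) - 2 * q * b * ((\<integral>x. U x \<partial>\<mu>) - (\<integral>x. U x \<partial>\<eta>))\<bar>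
      \<le> 4 * q ^ 3 * b * \<bar>(\<integral>x. V x \<partial>\<mu>) - (\<integral>x. V x \<partial>\<eta>)\<bar>
          * \<bar>(\<integral>x. U x \<partial>\<mu>) - (\<integral>x. U x \<partial>\<eta>)\<bar>)"
proof -
  obtain x0 where x0: "x0 \<in> space E" using probs_space_nonempty[OF \<eta>] by auto
  have q: "1 \<le> q" using q_ge_1[OF x0] .
  have b: "0 \<le> b" using g_osc[OF x0 x0] by simp
  define U where "U x = centred g \<eta> x / (2 * (q * b))" for x
  define V where "V x = nweight \<eta> x / (2 * q)" for x
  have nw_meas: "nweight \<eta> \<in> borel_measurable E"
    unfolding nweight_def[abs_def] using w_meas by measurable
  have "U \<in> Osc1 E"
    unfolding U_def using centred_bound[OF g g_osc \<eta>] nw_meas g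
    by (intro half_range_Osc1) (auto simp: centred_def[abs_def])
  moreover have "V \<in> Osc1 E"
    unfolding V_def using nweight_bounds[OF \<eta>] nw_meas
    by (intro half_range_Osc1) (auto simp: abs_of_pos)
  moreover have "\<bar>(wmean g \<mu> - wmean g \<eta>) - 2 * q * b * ((\<integral>x. U x \<partial>\<mu>) - (\<integral>x. U x \<partial>\<eta>))\<bar>
      \<le> 4 * q ^ 3 * b * \<bar>(\<integral>x. V x \<partial>\<mu>) - (\<integral>x. V x \<partial>\<eta>)\<bar>
          * \<bar>(\<integral>x. U x \<partial>\<mu>) - (\<integral>x. U x \<partial>\<eta>)\<bar>" if \<mu>: "\<mu> \<in> probs E" for \<mu>
  proof -
    define a where "a = (\<integral>x. centred g \<eta> x \<partial>\<mu>)"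
    define e where "e = wmass \<mu> / wmass \<eta>"
    have mass: "0 < wmass \<mu>" "0 < wmass \<eta>" using wmass_pos \<mu> \<eta> by auto
    have "wmean g \<mu> - wmean g \<eta> = a / e"
      using integral_centred[OF g g_osc \<eta> \<mu>] mass by (simp add: a_def e_def)
    moreover have "(\<integral>x. U x \<partial>\<mu>) - (\<integral>x. U x \<partial>\<eta>) = a / (2 * q * b)"
      using integral_centred[OF g g_osc \<eta> \<eta>] by (simp add: U_def a_def mult.assoc)
    moreover have "(\<integral>x. V x \<partial>\<mu>) - (\<integral>x. V x \<partial>\<eta>) = (e - 1) / (2 * q)"
      using mass by (simp add: V_def integral_nweight e_def diff_divide_distrib)
    moreover have "1 / q \<le> e"
      using wmass_ratio[OF \<mu> \<eta>] mass q by (simp add: e_def divide_le_eq le_divide_eq mult.commute)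
    moreover have "b = 0 \<Longrightarrow> a = 0"
      using probs_integral_bound[OF \<mu> _ centred_bound[OF g g_osc \<eta>]] nw_meas g
      by (auto simp: a_def centred_def[abs_def])
    ultimately show ?thesis using ratio_expansion[OF q b] by simp
  qed
  ultimately show ?thesis by blast
qed

end

theorem lemma4p3:
  fixes S :: "nat \<Rightarrow> 'a measure"
    and M :: "nat \<Rightarrow> 'a \<Rightarrow> 'a measure"
    and G :: "nat \<Rightarrow> 'a \<Rightarrow> real"
  assumes kernel: "\<And>n. n \<ge> 1 \<Longrightarrow> M n \<in> S (n - 1) \<rightarrow>\<^sub>M prob_algebra (S n)"
    and G_meas: "\<And>n. G n \<in> borel_measurable (S n)"
    and G_pos: "\<And>n x. x \<in> space (S n) \<Longrightarrow> 0 < G n x"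
    and G_lt1: "\<And>n x. x \<in> space (S n) \<Longrightarrow> G n x < 1"
    and G_ratio: "\<And>n. \<exists>C. \<forall>x\<in>space (S n). \<forall>y\<in>space (S n). G n x / G n y \<le> C"
    and pn: "p \<le> n"
    and eta: "\<eta> \<in> probs (S p)"
    and f: "f \<in> Osc1 (S n)"
  shows "\<exists>U V W. U \<in> Osc1 (S p) \<and> V \<in> Osc1 (S p) \<and> W \<in> Osc1 (S p) \<and>
    (\<forall>\<mu>\<in>probs (S p).
      \<bar>(Phi G M p n \<mu> f - Phi G M p n \<eta> f)
        - 2 * qpn S G M p n * beta S G M p n * ((\<integral>x. U x \<partial>\<mu>) - (\<integral>x. U x \<partial>\<eta>))\<bar>
      \<le> 4 * (qpn S G M p n) ^ 3 * beta S G M p n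
          * \<bar>(\<integral>x. V x \<partial>\<mu>) - (\<integral>x. V x \<partial>\<eta>)\<bar>
          * \<bar>(\<integral>x. W x \<partial>\<mu>) - (\<integral>x. W x \<partial>\<eta>)\<bar>)"
proof -
  interpret fk_model S M G
    using kernel G_meas G_pos G_lt1 G_ratio by unfold_locales
  define Q1 where "Q1 = Qpn G M p n (\<lambda>_. 1)"
  define g where "g = Ppn G M p n f"
  have Q1_pos: "0 < Q1 x" if "x \<in> space (S p)" for x
    using Qpn_one(2)[OF pn] that unfolding Q1_def by force
  interpret positive_weight "S p" Q1 "qpn S G M p n"
    using Qpn_one(1)[OF pn] Q1_pos Qpn_one_ratio[OF pn] unfolding Q1_def by unfold_locales auto
  have Phi_wmean: "Phi G M p n \<mu> f = wmean g \<mu>" if "\<mu> \<in> probs (S p)" for \<mu>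
  proof -
    have "(\<integral>x. Qpn G M p n f x \<partial>\<mu>) = (\<integral>x. Q1 x * g x \<partial>\<mu>)"
      using probs_space[OF that] Qpn_factor[OF pn, of _ f] unfolding Q1_def g_def
      by (intro Bochner_Integration.integral_cong) auto
    then show ?thesis unfolding Phi_def wmean_def wmass_def Q1_def[symmetric] by simp
  qed
  obtain U V where "U \<in> Osc1 (S p)" "V \<in> Osc1 (S p)" "\<forall>\<mu>\<in>probs (S p).
      \<bar>(wmean g \<mu> - wmean g \<eta>)
        - 2 * qpn S G M p n * beta S G M p n * ((\<integral>x. U x \<partial>\<mu>) - (\<integral>x. U x \<partial>\<eta>))\<bar>
      \<le> 4 * qpn S G M p n ^ 3 * beta S G M p n * \<bar>(\<integral>x. V x \<partial>\<mu>) - (\<integral>x. V x \<partial>\<eta>)\<bar>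
          * \<bar>(\<integral>x. U x \<partial>\<mu>) - (\<integral>x. U x \<partial>\<eta>)\<bar>"
    using wmean_expansion[OF Ppn_measurable[OF pn f] _ eta] Ppn_osc_beta[OF pn f]
    unfolding g_def by blast
  then show ?thesis using Phi_wmean eta by (intro exI[of _ U] exI[of _ V] exI[of _ U]) auto
qed

end
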